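(* Let $n \geq 2$, $\sigma \in \mathbb{R}$ and $p \in \mathbb{R}\setminus\{0\}$, and let $u \geq 0$ be a non-trivial classical solution of $-\Delta u = |x|^\sigma u^p$ in $\mathbb{R}^n$. Then: (1) the functions $r \mapsto \overline{u}(r)$ and $r \mapsto r^{n-1}\overline{u}'(r)$ are (non-strictly) decreasing on $(0,+\infty)$; (2) $r^{n-1}\overline{u}'(r) \leq 0$ and $\overline{u}(r) \leq u(0)$ for all $r > 0$; (3) $u(0) > 0$.
   Context: A classical solution is a function $u$ in $C^2(\mathbb{R}^n)$ if $\sigma \ge 0$, and in $C(\mathbb{R}^n)\cap C^2(\mathbb{R}^n\setminus\{0\})$ if $\sigma<0$, satisfying the equation pointwise (except at $x=0$ when $\sigma<0$); for $p<0$ this requires $u>0$ where the equation is imposed. The spherical average is $\overline{u}(0) = u(0)$ and $\overline{u}(r) = \frac{1}{|\partial B_r|}\int_{\partial B_r} u \, d\sigma$ for $r>0$, where $B_r$ is the open ball of radius $r$ centred at the origin. *)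

theory Defs
  imports "HOL-Analysis.Analysis"
begin

text \<open>Weight |x|^sigma, with the convention |0|^0 = 1 (and |0|^sigma = 0 for sigma > 0;
  for sigma < 0 the equation is not imposed at 0).\<close>
definition weight :: "real \<Rightarrow> 'a::real_normed_vector \<Rightarrow> real" where
  "weight \<sigma> x = (if x = 0 then (if \<sigma> = 0 then 1 else 0) else norm x powr \<sigma>)"

definition C2_with :: "'a::euclidean_space set \<Rightarrow> ('a \<Rightarrow> real) \<Rightarrow> ('a \<Rightarrow> 'a \<Rightarrow>\<^sub>L real)
    \<Rightarrow> ('a \<Rightarrow> 'a \<Rightarrow>\<^sub>L ('a \<Rightarrow>\<^sub>L real)) \<Rightarrow> bool" where
  "C2_with S u Du D2u \<longleftrightarrow>
     (\<forall>x\<in>S. (u has_derivative blinfun_apply (Du x)) (at x)) \<and>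
     (\<forall>x\<in>S. (Du has_derivative blinfun_apply (D2u x)) (at x)) \<and>
     continuous_on S D2u"

definition lap_of :: "('a::euclidean_space \<Rightarrow>\<^sub>L ('a \<Rightarrow>\<^sub>L real)) \<Rightarrow> real" where
  "lap_of H = (\<Sum>b\<in>Basis. blinfun_apply (blinfun_apply H b) b)"

definition classical_solution :: "real \<Rightarrow> real \<Rightarrow> ('a::euclidean_space \<Rightarrow> real) \<Rightarrow> bool" where
  "classical_solution \<sigma> p u \<longleftrightarrow>
     (let S = (if \<sigma> \<ge> 0 then UNIV else UNIV - {0}) in
       continuous_on UNIV u \<and>
       (\<exists>Du D2u. C2_with S u Du D2u \<and>
          (\<forall>x\<in>S. - lap_of (D2u x) = weight \<sigma> x * (u x powr p))) \<and>
       (p < 0 \<longrightarrow> (\<forall>x\<in>S. u x > 0)))"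

text \<open>The normalised surface measure on the unit sphere is realised as
  the (normalised) cone measure: for r > 0,
  avg_{|w|=1} u(r w) = (1/|B_1|) * integral over B_1 of u(r x/|x|) dx  (polar coordinates).\<close>
definition sph_avg :: "('a::euclidean_space \<Rightarrow> real) \<Rightarrow> real \<Rightarrow> real" where
  "sph_avg u r = (if r = 0 then u 0 else
      integral (ball 0 1) (\<lambda>x. u (r *\<^sub>R (x /\<^sub>R norm x))) / measure lborel (ball (0::'a) 1))"

end

theory Submission
  imports Defs
begin

(*
  Write \<phi>(r) for the spherical mean of u over the sphere of radius r. Differentiating under the
  integral, \<phi>'(r) is the spherical mean of the radial derivative of u, and
  (r^(n-1) \<phi>')' = r^(n-1) times the spherical mean of \<Delta>u, which is \<le> 0. Instead of the divergence
  theorem, this identity comes from the rotation invariance of spherical means: differentiating it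
  along the rotations of each coordinate plane and summing over all planes produces the Laplacian.
  So r^(n-1) \<phi>' is nonincreasing. It is also nonpositive: otherwise \<phi>' \<ge> K/r near 0 for some K > 0
  (here n \<ge> 2 is used), and \<phi> would tend to -\<infinity> at 0, contradicting u \<ge> 0. Hence \<phi> is
  nonincreasing and bounded by its limit u(0) at 0; if u(0) = 0, then \<phi> vanishes identically, and
  so does the nonnegative continuous function u on every sphere.
*)

section \<open>Invariance of Lebesgue measure under orthogonal maps\<close>

text \<open>The library proves this only for Cartesian powers \<open>real ^ 'n\<close> over a finite, well-ordered
  index type. Coordinates with respect to an enumeration of the basis identify any Euclidean space
  with such a power.\<close>

typedef (overloaded) ('a::euclidean_space) basis_index = "{..<DIM('a)}"
  morphisms index_nat Abs_basis_index
  by (rule exI[of _ 0]) simp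

instantiation basis_index :: (euclidean_space) linorder
begin
definition "less_eq_basis_index (i::'a basis_index) (j::'a basis_index) \<longleftrightarrow> index_nat i \<le> index_nat j"
definition "less_basis_index (i::'a basis_index) (j::'a basis_index) \<longleftrightarrow> index_nat i < index_nat j"
instance
  by standard (auto simp: less_eq_basis_index_def less_basis_index_def index_nat_inject)
end

instance basis_index :: (euclidean_space) wellorder
proof
  fix P :: "'a basis_index \<Rightarrow> bool" and i :: "'a basis_index"
  assume step: "\<And>i. (\<And>j. j < i \<Longrightarrow> P j) \<Longrightarrow> P i"
  have "\<And>i::'a basis_index. index_nat i = n \<Longrightarrow> P i" for n
    by (induction n rule: less_induct) (metis step less_basis_index_def)
  then show "P i" by blast
qed

lemma bij_betw_index_nat:
  "bij_betw index_nat (UNIV :: 'a::euclidean_space basis_index set) {..<DIM('a)}"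
  unfolding bij_betw_def inj_on_def
  using index_nat_inject type_definition.Rep_range[OF type_definition_basis_index] by blast

instance basis_index :: (euclidean_space) finite
  by standard (metis bij_betw_finite bij_betw_index_nat finite_lessThan)

definition basis_enum :: "'a basis_index \<Rightarrow> 'a::euclidean_space" where
  "basis_enum = (SOME f. bij_betw f UNIV Basis)"

lemma bij_betw_basis_enum: "bij_betw basis_enum UNIV (Basis :: 'a::euclidean_space set)"
proof -
  have "card (UNIV :: 'a basis_index set) = card (Basis :: 'a set)"
    using bij_betw_same_card[OF bij_betw_index_nat] by simp
  then have "\<exists>f. bij_betw f (UNIV :: 'a basis_index set) (Basis :: 'a set)"
    by (intro finite_same_card_bij) auto
  then show ?thesis unfolding basis_enum_def by (rule someI_ex)
qed

lemma sum_basis_enum: "(\<Sum>i\<in>UNIV. g (basis_enum i)) = (\<Sum>b\<in>Basis. g b)"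
  by (rule sum.reindex_bij_betw[OF bij_betw_basis_enum])

lemma prod_basis_enum: "(\<Prod>i\<in>UNIV. g (basis_enum i)) = (\<Prod>b\<in>Basis. g b)"
  by (rule prod.reindex_bij_betw[OF bij_betw_basis_enum])

lemma ball_Basis_iff_basis_enum: "(\<forall>b\<in>Basis. P b) \<longleftrightarrow> (\<forall>i. P (basis_enum i))"
  using bij_betw_basis_enum unfolding bij_betw_def by (metis UNIV_I imageE image_eqI)

lemma inner_basis_enum: "basis_enum i \<bullet> basis_enum j = (if i = j then 1 else 0)"
proof -
  have inj: "inj (basis_enum :: 'a basis_index \<Rightarrow> 'a)"
    and mem: "\<And>k. basis_enum k \<in> (Basis :: 'a set)"
    using bij_betw_basis_enum unfolding bij_betw_def by auto
  show ?thesis using inner_Basis[OF mem mem] injD[OF inj] by metis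
qed

definition to_cart :: "'a::euclidean_space \<Rightarrow> real ^ 'a basis_index" where
  "to_cart x = (\<chi> i. x \<bullet> basis_enum i)"

definition from_cart :: "real ^ 'a basis_index \<Rightarrow> 'a::euclidean_space" where
  "from_cart y = (\<Sum>i\<in>UNIV. y $ i *\<^sub>R basis_enum i)"

lemma from_cart_to_cart [simp]: "from_cart (to_cart x) = x"
  unfolding from_cart_def to_cart_def
  using sum_basis_enum[of "\<lambda>b. (x \<bullet> b) *\<^sub>R b"] by (simp add: euclidean_representation)

lemma inner_from_cart_basis_enum: "from_cart y \<bullet> basis_enum j = y $ j"
  unfolding from_cart_def by (simp add: inner_sum_left inner_basis_enum if_distrib cong: if_cong)

lemma to_cart_from_cart [simp]: "to_cart (from_cart y) = y"
  unfolding to_cart_def by (simp add: vec_eq_iff inner_from_cart_basis_enum)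

lemma linear_to_cart: "linear to_cart"
  by (rule linearI) (simp_all add: to_cart_def vec_eq_iff inner_add_left)

lemma linear_from_cart: "linear from_cart"
  by (rule linearI) (simp_all add: from_cart_def scaleR_add_left sum.distrib scaleR_sum_right)

lemma inner_to_cart: "to_cart x \<bullet> to_cart y = x \<bullet> y"
  unfolding to_cart_def inner_vec_def using sum_basis_enum[of "\<lambda>b. (x \<bullet> b) * (y \<bullet> b)"]
  by (simp add: euclidean_inner[of x y])

lemma inner_from_cart: "from_cart x \<bullet> from_cart y = x \<bullet> y"
  by (metis inner_to_cart to_cart_from_cart)

lemma linear_borel_measurable:
  fixes f :: "'a::euclidean_space \<Rightarrow> 'b::real_normed_vector"
  shows "linear f \<Longrightarrow> f \<in> borel_measurable borel"
  by (simp add: borel_measurable_continuous_onI linear_continuous_on linear_conv_bounded_linear)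

lemma distr_lborel_to_cart: "distr lborel borel (to_cart :: 'a::euclidean_space \<Rightarrow> _) = lborel"
proof (rule sym, rule lborel_eqI)
  fix l u :: "real ^ 'a basis_index"
  assume le: "\<And>b. b \<in> Basis \<Longrightarrow> l \<bullet> b \<le> u \<bullet> b"
  have le': "l $ i \<le> u $ i" for i
    using le[of "axis i 1"] unfolding Basis_vec_def by (auto simp: cart_eq_inner_axis)
  have "to_cart -` box l u = box (from_cart l) (from_cart u :: 'a)"
    by (auto simp: mem_box_cart mem_box ball_Basis_iff_basis_enum inner_from_cart_basis_enum
        to_cart_def)
  then have "emeasure (distr lborel borel to_cart) (box l u)
      = (\<Prod>b\<in>Basis. (from_cart u - from_cart l :: 'a) \<bullet> b)"
    using le' by (subst emeasure_distr)
      (auto intro: linear_borel_measurable linear_to_cart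
        simp: emeasure_lborel_box_eq ball_Basis_iff_basis_enum inner_from_cart_basis_enum)
  also have "\<dots> = (\<Prod>i\<in>UNIV. (u - l) $ i)"
    using prod_basis_enum[of "\<lambda>b. (from_cart u - from_cart l :: 'a) \<bullet> b"]
    by (simp add: inner_diff_left inner_from_cart_basis_enum)
  also have "\<dots> = (\<Prod>b\<in>Basis. (u - l) \<bullet> b)"
    by (simp add: Basis_vec_def cart_eq_inner_axis axis_eq_axis prod.UNION_disjoint)
  finally show "emeasure (distr lborel borel to_cart) (box l u) = (\<Prod>b\<in>Basis. (u - l) \<bullet> b)" .
qed simp

lemma distr_lborel_from_cart: "distr lborel borel (from_cart :: _ \<Rightarrow> 'a::euclidean_space) = lborel"
proof -
  have "distr lborel borel (from_cart :: _ \<Rightarrow> 'a)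
      = distr (distr lborel borel (to_cart :: 'a \<Rightarrow> _)) borel from_cart"
    by (simp add: distr_lborel_to_cart)
  also have "\<dots> = distr lborel borel (from_cart \<circ> to_cart)"
    by (rule distr_distr) (auto intro: linear_borel_measurable linear_from_cart linear_to_cart)
  also have "\<dots> = distr lborel lborel (\<lambda>x. x)"
    by (rule distr_cong) auto
  finally show ?thesis by simp
qed

lemma distr_lborel_orthogonal_transformation_cart:
  fixes f :: "real ^ 'n::{finite,wellorder} \<Rightarrow> real ^ 'n::_"
  assumes f: "orthogonal_transformation f"
  shows "distr lborel borel f = lborel"
proof (rule sym, rule lborel_eqI)
  fix l u :: "(real, 'n) vec"
  assume le: "\<And>b. b \<in> Basis \<Longrightarrow> l \<bullet> b \<le> u \<bullet> b"
  have g: "orthogonal_transformation (inv f)"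
    by (rule orthogonal_transformation_inv[OF f])
  have pre: "f -` box l u = inv f ` box l u"
    using orthogonal_transformation_bij[OF f] by (simp add: bij_vimage_eq_inv_image)
  have "open (f -` box l u)"
    by (intro open_vimage linear_continuous_on) (auto simp: orthogonal_transformation_linear[OF f]
      linear_conv_bounded_linear[symmetric])
  then have "emeasure (distr lborel borel f) (box l u) = emeasure lebesgue (f -` box l u)"
    by (subst emeasure_distr)
      (auto intro!: linear_borel_measurable orthogonal_transformation_linear[OF f])
  also have "\<dots> = measure lebesgue (box l u)"
    unfolding pre using measurable_orthogonal_image[OF g lmeasurable_box]
      measure_orthogonal_image[OF g lmeasurable_box] by (simp add: emeasure_eq_measure2)
  also have "\<dots> = (\<Prod>b\<in>Basis. (u - l) \<bullet> b)"
    using le by (simp add: emeasure_eq_measure2 emeasure_lborel_box_eq[symmetric])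
  finally show "emeasure (distr lborel borel f) (box l u) = (\<Prod>b\<in>Basis. (u - l) \<bullet> b)" .
qed simp

lemma distr_lborel_orthogonal_transformation:
  fixes f :: "'a::euclidean_space \<Rightarrow> 'a"
  assumes f: "orthogonal_transformation f"
  shows "distr lborel borel f = lborel"
proof -
  define g where "g y = to_cart (f (from_cart y))" for y :: "real ^ 'a basis_index"
  have lin: "linear g"
    using linear_compose[OF linear_compose[OF linear_from_cart orthogonal_transformation_linear[OF f]]
        linear_to_cart]
    by (simp add: g_def[abs_def] comp_def)
  have "orthogonal_transformation g"
    using lin f by (simp add: orthogonal_transformation_def g_def inner_to_cart inner_from_cart)
  then have g_lborel: "distr lborel borel g = lborel"
    by (rule distr_lborel_orthogonal_transformation_cart)
  have "f = from_cart \<circ> g \<circ> to_cart" by (simp add: fun_eq_iff g_def)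
  then have "distr lborel borel f = distr (distr lborel borel to_cart) borel (from_cart \<circ> g)"
    by (simp, subst distr_distr)
      (auto intro!: linear_borel_measurable linear_from_cart linear_to_cart linear_compose lin
        simp: comp_assoc)
  also have "\<dots> = distr (distr lborel borel g) borel from_cart"
    by (simp add: distr_lborel_to_cart, subst distr_distr)
      (auto intro!: linear_borel_measurable linear_from_cart lin)
  finally show ?thesis by (simp add: g_lborel distr_lborel_from_cart)
qed

lemma integral_orthogonal_transformation:
  fixes R :: "'a::euclidean_space \<Rightarrow> 'a" and f :: "'a \<Rightarrow> real"
  assumes R: "orthogonal_transformation R" and S: "S \<in> sets borel" "R -` S = S"
    and f: "set_integrable lborel S f"
  shows "integral S (\<lambda>x. f (R x)) = integral S f"
proof -
  define g where "g x = indicator S x *\<^sub>R f x" for x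
  have g: "integrable lborel g"
    using f unfolding set_integrable_def g_def[abs_def] .
  then have g_meas: "g \<in> borel_measurable borel"
    using borel_measurable_integrable[OF g] by simp
  have R_meas: "R \<in> measurable lborel borel"
    using linear_borel_measurable[OF orthogonal_transformation_linear[OF R]] by simp
  have g_R: "g (R x) = indicator S x *\<^sub>R f (R x)" for x
    using S(2) by (simp add: g_def indicator_def) (metis vimage_eq)
  have "integrable lborel (\<lambda>x. g (R x))"
    using g integrable_distr_eq[OF R_meas g_meas] distr_lborel_orthogonal_transformation[OF R]
    by simp
  then have fR: "set_integrable lborel S (\<lambda>x. f (R x))"
    unfolding set_integrable_def g_R .
  have "integral S (\<lambda>x. f (R x)) = integral\<^sup>L lborel (\<lambda>x. g (R x))"
    using set_borel_integral_eq_integral(2)[OF fR] unfolding set_lebesgue_integral_def g_R by simp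
  also have "\<dots> = integral\<^sup>L (distr lborel borel R) g"
    by (rule integral_distr[OF R_meas g_meas, symmetric])
  also have "\<dots> = integral S f"
    using set_borel_integral_eq_integral(2)[OF f]
    by (simp add: distr_lborel_orthogonal_transformation[OF R] set_lebesgue_integral_def
        g_def[abs_def])
  finally show ?thesis .
qed

lemma integral_const_lmeasurable:
  "S \<in> lmeasurable \<Longrightarrow> integral S (\<lambda>_. c) = c * measure lebesgue S"
  using integral_mult_right[of S c "\<lambda>_. 1"] by (simp add: lmeasure_integral)

lemma integral_pos_if_continuous_pos:
  fixes f :: "'a::euclidean_space \<Rightarrow> real"
  assumes S: "open S" and f: "continuous_on S f" "set_integrable lborel S f"
    and nonneg: "\<And>y. y \<in> S \<Longrightarrow> 0 \<le> f y" and x: "x \<in> S" "0 < f x"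
  shows "0 < integral S f"
proof -
  obtain \<rho>1 where \<rho>1: "\<rho>1 > 0" "ball x \<rho>1 \<subseteq> S"
    using S x(1) open_contains_ball by blast
  obtain \<rho>2 where \<rho>2: "\<rho>2 > 0" "\<And>y. y \<in> S \<Longrightarrow> dist y x < \<rho>2 \<Longrightarrow> dist (f y) (f x) < f x / 2"
    using f(1) x unfolding continuous_on_iff by (metis half_gt_zero)
  define \<rho> where "\<rho> = min \<rho>1 \<rho>2"
  have \<rho>: "\<rho> > 0" "ball x \<rho> \<subseteq> S"
    using \<rho>1 \<rho>2(1) by (auto simp: \<rho>_def)
  have large: "f x / 2 \<le> f y" if "y \<in> ball x \<rho>" for y
  proof -
    have "y \<in> S" "dist y x < \<rho>2"
      using that \<rho>(2) by (auto simp: \<rho>_def dist_commute)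
    then have "dist (f y) (f x) < f x / 2"
      by (rule \<rho>2(2))
    then show ?thesis
      unfolding dist_real_def abs_less_iff by linarith
  qed
  have int_ball: "f integrable_on ball x \<rho>"
    using set_borel_integral_eq_integral(1)[OF set_integrable_subset[OF f(2) _ \<rho>(2)]] by simp
  have "0 < f x / 2 * measure lebesgue (ball x \<rho>)"
    using x(2) content_ball_pos[OF \<rho>(1)] by simp
  also have "\<dots> = integral (ball x \<rho>) (\<lambda>_. f x / 2)"
    by (simp add: integral_const_lmeasurable)
  also have "\<dots> \<le> integral (ball x \<rho>) f"
    by (rule integral_le[OF _ int_ball large]) (simp add: integrable_on_const)
  also have "\<dots> \<le> integral S f"
    using integral_subset_le[OF \<rho>(2) int_ball set_borel_integral_eq_integral(1)[OF f(2)]] nonneg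
    by blast
  finally show ?thesis .
qed


section \<open>Cone integrals\<close>

lemma continuous_on_radial:
  assumes "continuous_on (sphere 0 1) h"
  shows "continuous_on (- {0}) (\<lambda>x. h (x /\<^sub>R norm x))"
proof (rule continuous_on_compose2[OF assms])
  show "(\<lambda>x. x /\<^sub>R norm x) ` (- {0}) \<subseteq> sphere 0 1"
    by (auto simp: image_subset_iff)
  show "continuous_on (- {0}) (\<lambda>x. x /\<^sub>R norm x)"
    by (intro continuous_intros) auto
qed

lemma set_integrable_radial:
  fixes h :: "'a::euclidean_space \<Rightarrow> real"
  assumes h: "continuous_on (sphere 0 1) h" and S: "open S" "bounded S" "0 \<notin> S"
  shows "set_integrable lborel S (\<lambda>x. h (x /\<^sub>R norm x))"
proof -
  obtain B where B: "\<And>\<omega>. \<omega> \<in> sphere 0 1 \<Longrightarrow> norm (h \<omega>) \<le> B"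
    using compact_imp_bounded[OF compact_continuous_image[OF h compact_sphere]]
    unfolding bounded_iff by blast
  have bound: "\<bar>h (x /\<^sub>R norm x)\<bar> \<le> B" if "x \<in> S" for x
    using B[of "x /\<^sub>R norm x"] S(3) that by (cases "x = 0") auto
  have "continuous_on S (\<lambda>x. h (x /\<^sub>R norm x))"
    using continuous_on_subset[OF continuous_on_radial[OF h]] S(3) by blast
  then have "(\<lambda>x. indicator S x *\<^sub>R h (x /\<^sub>R norm x)) \<in> borel_measurable borel"
    by (rule borel_measurable_continuous_on_indicator[rotated]) (use S(1) in auto)
  then show ?thesis
    unfolding set_integrable_def
    by (intro integrableI_bounded_set[where A = S and B = B])
      (use S bound emeasure_bounded_finite[OF S(2)] in \<open>auto simp: indicator_def\<close>)
qed

text \<open>In polar coordinates, \<open>cone_integral h\<close> is the volume of the unit ball times the mean of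
  \<open>h\<close> over the unit sphere.\<close>

definition cone_integral :: "('a::euclidean_space \<Rightarrow> real) \<Rightarrow> real" where
  "cone_integral h = integral (ball 0 1 - {0}) (\<lambda>x. h (x /\<^sub>R norm x))"

lemma set_integrable_cone:
  fixes h :: "'a::euclidean_space \<Rightarrow> real"
  shows "continuous_on (sphere 0 1) h \<Longrightarrow>
    set_integrable lborel (ball 0 1 - {0}) (\<lambda>x. h (x /\<^sub>R norm x))"
  by (rule set_integrable_radial) auto

lemma integrable_cone:
  fixes h :: "'a::euclidean_space \<Rightarrow> real"
  shows "continuous_on (sphere 0 1) h \<Longrightarrow> (\<lambda>x. h (x /\<^sub>R norm x)) integrable_on (ball 0 1 - {0})"
  using set_borel_integral_eq_integral(1)[OF set_integrable_cone] .

lemma cone_integral_cong: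
  "(\<And>\<omega>. \<omega> \<in> sphere 0 1 \<Longrightarrow> f \<omega> = g \<omega>) \<Longrightarrow> cone_integral f = cone_integral g"
  unfolding cone_integral_def by (rule integral_cong) simp

lemma cone_integral_diff:
  "continuous_on (sphere 0 1) f \<Longrightarrow> continuous_on (sphere 0 1) g \<Longrightarrow>
    cone_integral (\<lambda>\<omega>. f \<omega> - g \<omega>) = cone_integral f - cone_integral g"
  unfolding cone_integral_def by (rule integral_diff) (auto intro: integrable_cone)

lemma cone_integral_cmult: "cone_integral (\<lambda>\<omega>. k * f \<omega>) = k * cone_integral f"
  unfolding cone_integral_def by simp

lemma cone_integral_sum:
  "finite I \<Longrightarrow> (\<And>i. i \<in> I \<Longrightarrow> continuous_on (sphere 0 1) (f i)) \<Longrightarrow>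
    cone_integral (\<lambda>\<omega>. \<Sum>i\<in>I. f i \<omega>) = (\<Sum>i\<in>I. cone_integral (f i))"
  unfolding cone_integral_def by (rule integral_sum) (auto intro: integrable_cone)

lemma measure_unit_ball_pos: "0 < measure lborel (ball (0::'a::euclidean_space) 1)"
  by (rule content_ball_pos) simp

lemma cone_integral_const:
  "cone_integral (\<lambda>_::'a::euclidean_space. k) = k * measure lborel (ball (0::'a) 1)"
proof -
  have lm: "ball (0::'a) 1 - {0} \<in> lmeasurable"
    by (intro lmeasurable_open) auto
  have "integral (ball 0 1 - {0}) (\<lambda>_::'a. k) = k * measure lebesgue (ball (0::'a) 1 - {0})"
    by (rule integral_const_lmeasurable[OF lm])
  also have "measure lebesgue (ball (0::'a) 1 - {0}) = measure lebesgue (ball (0::'a) 1)"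
    by (rule measure_negligible_symdiff) (auto intro: negligible_subset[of "{0}"])
  finally show ?thesis
    unfolding cone_integral_def by simp
qed

lemma cone_integral_mono:
  "continuous_on (sphere 0 1) f \<Longrightarrow> continuous_on (sphere 0 1) g \<Longrightarrow>
    (\<And>\<omega>. \<omega> \<in> sphere 0 1 \<Longrightarrow> f \<omega> \<le> g \<omega>) \<Longrightarrow> cone_integral f \<le> cone_integral g"
  unfolding cone_integral_def by (rule integral_le) (auto intro: integrable_cone)

lemma abs_cone_integral_le:
  fixes h :: "'a::euclidean_space \<Rightarrow> real"
  assumes "continuous_on (sphere 0 1) h" "\<And>\<omega>. \<omega> \<in> sphere 0 1 \<Longrightarrow> \<bar>h \<omega>\<bar> \<le> B"
  shows "\<bar>cone_integral h\<bar> \<le> B * measure lborel (ball (0::'a) 1)"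
proof -
  have "- B \<le> h \<omega>" "h \<omega> \<le> B" if "\<omega> \<in> sphere 0 1" for \<omega>
    using assms(2)[OF that] by auto
  then have "cone_integral h \<le> B * measure lborel (ball (0::'a) 1)"
    and "- B * measure lborel (ball (0::'a) 1) \<le> cone_integral h"
    using cone_integral_mono[of h "\<lambda>_. B"] cone_integral_mono[of "\<lambda>_. - B" h] assms(1)
    by (auto simp: cone_integral_const)
  then show ?thesis
    by (simp add: abs_le_iff)
qed

lemma cone_integral_eq_0_imp_eq_0:
  fixes h :: "'a::euclidean_space \<Rightarrow> real"
  assumes h: "continuous_on (sphere 0 1) h" "\<And>\<omega>. \<omega> \<in> sphere 0 1 \<Longrightarrow> 0 \<le> h \<omega>"
    and zero: "cone_integral h = 0" and \<omega>: "\<omega> \<in> sphere 0 1"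
  shows "h \<omega> = 0"
proof (rule ccontr)
  assume "h \<omega> \<noteq> 0"
  have "0 < integral (ball 0 1 - {0}) (\<lambda>x. h (x /\<^sub>R norm x))"
  proof (rule integral_pos_if_continuous_pos[where x = "(1/2) *\<^sub>R \<omega>"])
    show "continuous_on (ball 0 1 - {0}) (\<lambda>x. h (x /\<^sub>R norm x))"
      by (rule continuous_on_subset[OF continuous_on_radial[OF h(1)]]) auto
    show "0 \<le> h (x /\<^sub>R norm x)" if "x \<in> ball 0 1 - {0}" for x
      using h(2)[of "x /\<^sub>R norm x"] that by simp
    show "0 < h ((1/2) *\<^sub>R \<omega> /\<^sub>R norm ((1/2) *\<^sub>R \<omega>))"
      using h(2)[OF \<omega>] \<open>h \<omega> \<noteq> 0\<close> \<omega> by simp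
  qed (use \<omega> set_integrable_cone[OF h(1)] in auto)
  with zero show False
    unfolding cone_integral_def by simp
qed

lemma cone_integral_orthogonal_transformation:
  fixes R :: "'a::euclidean_space \<Rightarrow> 'a" and h :: "'a \<Rightarrow> real"
  assumes R: "orthogonal_transformation R" and h: "continuous_on (sphere 0 1) h"
  shows "cone_integral (\<lambda>\<omega>. h (R \<omega>)) = cone_integral h"
proof -
  have norm_R: "norm (R x) = norm x" for x
    using R by (simp add: orthogonal_transformation)
  then have R0: "R x = 0 \<longleftrightarrow> x = 0" for x
    by (metis norm_eq_zero)
  have "R (x /\<^sub>R norm x) = R x /\<^sub>R norm (R x)" for x
    by (simp add: norm_R linear_cmul[OF orthogonal_transformation_linear[OF R]])
  then have "cone_integral (\<lambda>\<omega>. h (R \<omega>)) = integral (ball 0 1 - {0}) (\<lambda>x. h (R x /\<^sub>R norm (R x)))"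
    unfolding cone_integral_def by simp
  also have "\<dots> = cone_integral h"
  proof -
    have S: "R -` (ball 0 1 - {0}) = ball 0 1 - {0}"
      by (auto simp: R0 norm_R)
    have "ball (0::'a) 1 - {0} \<in> sets borel"
      by (intro borel_open) auto
    from integral_orthogonal_transformation[OF R this S set_integrable_cone[OF h]]
    show ?thesis
      unfolding cone_integral_def by simp
  qed
  finally show ?thesis .
qed

lemma uniform_linearization_compact:
  fixes F G :: "real \<Rightarrow> 'a::metric_space \<Rightarrow> real"
  assumes d: "d > 0" and K: "compact K"
    and F: "\<And>t \<omega>. t \<in> ball t0 d \<Longrightarrow> \<omega> \<in> K \<Longrightarrow> ((\<lambda>t. F t \<omega>) has_real_derivative G t \<omega>) (at t)"
    and G: "continuous_on (cball t0 d \<times> K) (\<lambda>(t, \<omega>). G t \<omega>)"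
    and e: "e > 0"
  obtains \<delta> where "\<delta> > 0"
    "\<And>y \<omega>. \<bar>y - t0\<bar> < \<delta> \<Longrightarrow> \<omega> \<in> K \<Longrightarrow> \<bar>F y \<omega> - F t0 \<omega> - G t0 \<omega> * (y - t0)\<bar> \<le> e * \<bar>y - t0\<bar>"
proof -
  have "uniformly_continuous_on (cball t0 d \<times> K) (\<lambda>(t, \<omega>). G t \<omega>)"
    by (intro compact_uniformly_continuous G compact_Times K compact_cball)
  then obtain \<delta> where \<delta>: "\<delta> > 0"
    and unif: "\<And>p q. p \<in> cball t0 d \<times> K \<Longrightarrow> q \<in> cball t0 d \<times> K \<Longrightarrow> dist q p < \<delta> \<Longrightarrow>
      dist ((\<lambda>(t, \<omega>). G t \<omega>) q) ((\<lambda>(t, \<omega>). G t \<omega>) p) < e"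
    using e unfolding uniformly_continuous_on_def by metis
  show ?thesis
  proof (rule that[of "min \<delta> d"])
    show "min \<delta> d > 0" using \<delta> d by simp
    fix y \<omega> assume y: "\<bar>y - t0\<bar> < min \<delta> d" and \<omega>: "\<omega> \<in> K"
    have seg: "s \<in> ball t0 d" "\<bar>s - t0\<bar> < \<delta>" if "s \<in> closed_segment t0 y" for s
    proof -
      have "\<bar>s - t0\<bar> \<le> \<bar>y - t0\<bar>"
        using that by (auto simp: closed_segment_eq_real_ivl split: if_splits)
      then show "s \<in> ball t0 d" "\<bar>s - t0\<bar> < \<delta>"
        using y by (auto simp: dist_real_def)
    qed
    have "norm ((F y \<omega> - G t0 \<omega> * y) - (F t0 \<omega> - G t0 \<omega> * t0)) \<le> e * norm (y - t0)"
    proof (rule field_differentiable_bound[OF convex_closed_segment])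
      fix s assume s: "s \<in> closed_segment t0 y"
      have "((\<lambda>s. F s \<omega> - G t0 \<omega> * s) has_field_derivative G s \<omega> - G t0 \<omega>) (at s)"
        using F[OF seg(1)[OF s] \<omega>] by (auto intro!: derivative_eq_intros)
      then show "((\<lambda>s. F s \<omega> - G t0 \<omega> * s) has_field_derivative G s \<omega> - G t0 \<omega>)
          (at s within closed_segment t0 y)"
        by (rule has_field_derivative_at_within)
      have "dist (G s \<omega>) (G t0 \<omega>) < e"
        using unif[of "(t0, \<omega>)" "(s, \<omega>)"] seg[OF s] \<omega> d by (auto simp: dist_Pair_Pair dist_real_def)
      then show "norm (G s \<omega> - G t0 \<omega>) \<le> e"
        by (simp add: dist_norm)
    qed auto
    then show "\<bar>F y \<omega> - F t0 \<omega> - G t0 \<omega> * (y - t0)\<bar> \<le> e * \<bar>y - t0\<bar>"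
      by (simp add: algebra_simps)
  qed
qed

lemma has_real_derivative_cone_integral:
  fixes F G :: "real \<Rightarrow> 'a::euclidean_space \<Rightarrow> real"
  assumes d: "d > 0"
    and F: "\<And>t \<omega>. t \<in> ball t0 d \<Longrightarrow> \<omega> \<in> sphere 0 1 \<Longrightarrow> ((\<lambda>t. F t \<omega>) has_real_derivative G t \<omega>) (at t)"
    and F_cont: "\<And>t. t \<in> ball t0 d \<Longrightarrow> continuous_on (sphere 0 1) (F t)"
    and G: "continuous_on (cball t0 d \<times> sphere 0 1) (\<lambda>(t, \<omega>). G t \<omega>)"
  shows "((\<lambda>t. cone_integral (F t)) has_real_derivative cone_integral (G t0)) (at t0)"
  unfolding has_field_derivative_def has_derivative_at_alt
proof (intro conjI allI impI)
  show "bounded_linear ((*) (cone_integral (G t0)))"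
    by (rule bounded_linear_mult_right)
  let ?\<mu> = "measure lborel (ball (0::'a) 1)"
  have \<mu>: "?\<mu> > 0"
    by (rule content_ball_pos) simp
  have "continuous_on (sphere 0 1) (\<lambda>\<omega>. (\<lambda>(t, \<omega>). G t \<omega>) (t0, \<omega>))"
    by (rule continuous_on_compose2[OF G]) (use d in \<open>auto intro!: continuous_intros\<close>)
  then have G0_cont: "continuous_on (sphere 0 1) (G t0)"
    by simp
  fix e :: real assume e: "e > 0"
  obtain \<delta> where \<delta>: "\<delta> > 0" and lin: "\<And>y \<omega>. \<bar>y - t0\<bar> < \<delta> \<Longrightarrow> \<omega> \<in> sphere 0 1 \<Longrightarrow>
      \<bar>F y \<omega> - F t0 \<omega> - G t0 \<omega> * (y - t0)\<bar> \<le> e / ?\<mu> * \<bar>y - t0\<bar>"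
    using uniform_linearization_compact[OF d compact_sphere F G, of "e / ?\<mu>"] e \<mu> by auto
  show "\<exists>\<delta>>0. \<forall>y. norm (y - t0) < \<delta> \<longrightarrow> norm (cone_integral (F y) - cone_integral (F t0)
      - cone_integral (G t0) * (y - t0)) \<le> e * norm (y - t0)"
  proof (intro exI[of _ "min \<delta> d"] conjI allI impI)
    show "min \<delta> d > 0" using \<delta> d by simp
    fix y assume y: "norm (y - t0) < min \<delta> d"
    have cont: "continuous_on (sphere 0 1) (F y)" "continuous_on (sphere 0 1) (F t0)"
      using F_cont y d by (auto simp: dist_real_def)
    have "cone_integral (F y) - cone_integral (F t0) - cone_integral (G t0) * (y - t0)
        = cone_integral (\<lambda>\<omega>. F y \<omega> - F t0 \<omega> - G t0 \<omega> * (y - t0))"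
      using cont G0_cont
      by (simp add: cone_integral_diff continuous_on_diff continuous_on_mult_right
          cone_integral_cmult[of "y - t0", symmetric] mult.commute)
    also have "\<bar>\<dots>\<bar> \<le> e / ?\<mu> * \<bar>y - t0\<bar> * ?\<mu>"
    proof (rule abs_cone_integral_le)
      show "continuous_on (sphere 0 1) (\<lambda>\<omega>. F y \<omega> - F t0 \<omega> - G t0 \<omega> * (y - t0))"
        using cont G0_cont by (intro continuous_on_diff continuous_on_mult_right)
      show "\<bar>F y \<omega> - F t0 \<omega> - G t0 \<omega> * (y - t0)\<bar> \<le> e / ?\<mu> * \<bar>y - t0\<bar>"
        if "\<omega> \<in> sphere 0 1" for \<omega>
        using lin[OF _ that] y by simp
    qed
    finally show "norm (cone_integral (F y) - cone_integral (F t0)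
        - cone_integral (G t0) * (y - t0)) \<le> e * norm (y - t0)"
      using \<mu> by simp
  qed
qed

section \<open>Rotations in coordinate planes\<close>

definition plane_rotation :: "'a::real_inner \<Rightarrow> 'a \<Rightarrow> real \<Rightarrow> 'a \<Rightarrow> 'a" where
  "plane_rotation b c t x = x + (cos t - 1) *\<^sub>R ((x \<bullet> b) *\<^sub>R b + (x \<bullet> c) *\<^sub>R c)
     + sin t *\<^sub>R ((x \<bullet> b) *\<^sub>R c - (x \<bullet> c) *\<^sub>R b)"

definition rotation_generator :: "'a::real_inner \<Rightarrow> 'a \<Rightarrow> 'a \<Rightarrow> 'a" where
  "rotation_generator b c x = (x \<bullet> b) *\<^sub>R c - (x \<bullet> c) *\<^sub>R b"

lemma linear_plane_rotation: "linear (plane_rotation b c t)"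
  by (rule linearI) (simp_all add: plane_rotation_def algebra_simps inner_add_left)

lemma linear_rotation_generator: "linear (rotation_generator b c)"
  by (rule linearI) (simp_all add: rotation_generator_def algebra_simps inner_add_left)

lemma continuous_on_rotation_generator:
  "continuous_on S (rotation_generator b c :: 'a::euclidean_space \<Rightarrow> 'a)"
  by (rule linear_continuous_on)
    (simp add: linear_conv_bounded_linear[symmetric] linear_rotation_generator)

lemma orthogonal_transformation_plane_rotation:
  assumes "b \<bullet> b = 1" "c \<bullet> c = 1" "b \<bullet> c = 0"
  shows "orthogonal_transformation (plane_rotation b c t)"
proof -
  have "plane_rotation b c t x \<bullet> plane_rotation b c t x = x \<bullet> x" for x
  proof -
    define p q C S where "p = x \<bullet> b" and "q = x \<bullet> c" and "C = cos t" and "S = sin t"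
    have CS: "C * C + S * S = 1"
      unfolding C_def S_def by (metis power2_eq_square sin_cos_squared_add2)
    have "plane_rotation b c t x = x + (C - 1) *\<^sub>R (p *\<^sub>R b + q *\<^sub>R c) + S *\<^sub>R (p *\<^sub>R c - q *\<^sub>R b)"
      by (simp add: plane_rotation_def p_def q_def C_def S_def)
    also have "\<dots> \<bullet> \<dots> = x \<bullet> x + (2 * (C - 1) + (C - 1) * (C - 1) + S * S) * (p * p + q * q)"
      using assms
      by (simp add: inner_add_left inner_add_right inner_diff_left inner_diff_right
          inner_commute[of b x] inner_commute[of c x] inner_commute[of c b]
          p_def[symmetric] q_def[symmetric] algebra_simps)
    also have "\<dots> = x \<bullet> x"
      using CS by (simp add: algebra_simps)
    finally show ?thesis .
  qed
  then show ?thesis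
    unfolding orthogonal_transformation using linear_plane_rotation
    by (simp add: norm_eq_sqrt_inner)
qed

lemma plane_rotation_0 [simp]: "plane_rotation b c 0 x = x"
  by (simp add: plane_rotation_def)

lemma continuous_on_plane_rotation: "continuous_on S (\<lambda>p. plane_rotation b c (fst p) (snd p))"
  unfolding plane_rotation_def by (intro continuous_intros)

lemma has_vector_derivative_plane_rotation:
  assumes "b \<bullet> b = 1" "c \<bullet> c = 1" "b \<bullet> c = 0"
  shows "((\<lambda>t. plane_rotation b c t x) has_vector_derivative
      rotation_generator b c (plane_rotation b c t x)) (at t)"
proof -
  have "((\<lambda>t. plane_rotation b c t x) has_vector_derivative
      (- sin t) *\<^sub>R ((x \<bullet> b) *\<^sub>R b + (x \<bullet> c) *\<^sub>R c) + cos t *\<^sub>R rotation_generator b c x) (at t)"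
    unfolding plane_rotation_def rotation_generator_def
    by (auto intro!: derivative_eq_intros simp: has_vector_derivative_def algebra_simps)
  moreover have "(- sin t) *\<^sub>R ((x \<bullet> b) *\<^sub>R b + (x \<bullet> c) *\<^sub>R c) + cos t *\<^sub>R rotation_generator b c x
      = rotation_generator b c (plane_rotation b c t x)"
    using assms
    by (simp add: plane_rotation_def rotation_generator_def inner_add_left inner_diff_left
        inner_commute[of c b] algebra_simps)
  ultimately show ?thesis
    by simp
qed

lemma has_real_derivative_cone_integral_plane_rotation:
  fixes w :: "'a::euclidean_space \<Rightarrow> real" and Dw :: "'a \<Rightarrow> 'a \<Rightarrow> real"
  assumes bc: "b \<bullet> b = 1" "c \<bullet> c = 1" "b \<bullet> c = 0"
    and U: "open U" "sphere 0 1 \<subseteq> U"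
    and w: "\<And>y. y \<in> U \<Longrightarrow> (w has_derivative Dw y) (at y)"
    and Dw: "continuous_on (U \<times> UNIV) (\<lambda>(y, h). Dw y h)"
  shows "((\<lambda>t. cone_integral (\<lambda>\<omega>. w (plane_rotation b c t \<omega>))) has_real_derivative
      cone_integral (\<lambda>\<omega>. Dw \<omega> (rotation_generator b c \<omega>))) (at 0)"
proof -
  let ?R = "plane_rotation b c" and ?A = "rotation_generator b c"
  have R_norm: "norm (?R t x) = norm x" for t x
    using orthogonal_transformation_plane_rotation[OF bc, of t]
    unfolding orthogonal_transformation by simp
  have w_cont: "continuous_on (sphere 0 1) w"
    using w U(2) by (meson continuous_at_imp_continuous_on has_derivative_continuous subsetD)
  have F_cont: "continuous_on (sphere 0 1) (\<lambda>\<omega>. w (?R t \<omega>))" for t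
    by (rule continuous_on_compose2[OF w_cont linear_continuous_on])
      (auto simp: linear_conv_bounded_linear[symmetric] linear_plane_rotation R_norm)
  have F: "((\<lambda>t. w (?R t \<omega>)) has_real_derivative Dw (?R t \<omega>) (?A (?R t \<omega>))) (at t)"
    if "\<omega> \<in> sphere 0 1" for t \<omega>
  proof -
    have "?R t \<omega> \<in> sphere 0 1"
      using that by (simp add: R_norm)
    then have "(w has_derivative Dw (?R t \<omega>)) (at (?R t \<omega>))"
      using w U(2) by blast
    from has_derivative_compose[OF has_vector_derivative_plane_rotation[OF bc, unfolded
          has_vector_derivative_def] this]
    have "((\<lambda>t. w (?R t \<omega>)) has_derivative (\<lambda>h. h * Dw (?R t \<omega>) (?A (?R t \<omega>)))) (at t)"
      using linear_cmul[OF has_derivative_linear[OF \<open>(w has_derivative _) _\<close>]] by simp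
    then show ?thesis
      by (simp add: has_field_derivative_def mult.commute[of _ "Dw (?R t \<omega>) (?A (?R t \<omega>))"])
  qed
  have "continuous_on (cball 0 1 \<times> sphere 0 1)
      (\<lambda>p. (\<lambda>(y, h). Dw y h) (?R (fst p) (snd p), ?A (?R (fst p) (snd p))))"
    by (rule continuous_on_compose2[OF Dw])
      (use U(2) in \<open>auto simp: R_norm intro!: continuous_intros continuous_on_plane_rotation
        continuous_on_compose2[OF continuous_on_rotation_generator continuous_on_plane_rotation]\<close>)
  then have G_cont:
    "continuous_on (cball 0 1 \<times> sphere 0 1) (\<lambda>(t, \<omega>). Dw (?R t \<omega>) (?A (?R t \<omega>)))"
    by (simp add: case_prod_beta')
  have "((\<lambda>t. cone_integral (\<lambda>\<omega>. w (?R t \<omega>))) has_real_derivative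
      cone_integral (\<lambda>\<omega>. Dw (?R 0 \<omega>) (?A (?R 0 \<omega>)))) (at 0)"
    by (rule has_real_derivative_cone_integral[where d = 1]) (auto intro: F F_cont G_cont)
  then show ?thesis
    by simp
qed

text \<open>The left-hand side is the derivative at angle \<open>0\<close> of the rotation invariant
  \<open>t \<mapsto> cone_integral (\<lambda>\<omega>. w (plane_rotation b c t \<omega>))\<close>.\<close>

lemma cone_integral_rotation_generator_eq_0:
  fixes w :: "'a::euclidean_space \<Rightarrow> real" and Dw :: "'a \<Rightarrow> 'a \<Rightarrow> real"
  assumes bc: "b \<bullet> b = 1" "c \<bullet> c = 1" "b \<bullet> c = 0"
    and U: "open U" "sphere 0 1 \<subseteq> U"
    and w: "\<And>y. y \<in> U \<Longrightarrow> (w has_derivative Dw y) (at y)"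
    and Dw: "continuous_on (U \<times> UNIV) (\<lambda>(y, h). Dw y h)"
  shows "cone_integral (\<lambda>\<omega>. Dw \<omega> (rotation_generator b c \<omega>)) = 0"
proof -
  have "continuous_on (sphere 0 1) w"
    using w U(2) by (meson continuous_at_imp_continuous_on has_derivative_continuous subsetD)
  then have "(\<lambda>t. cone_integral (\<lambda>\<omega>. w (plane_rotation b c t \<omega>))) = (\<lambda>t. cone_integral w)"
    using cone_integral_orthogonal_transformation[OF orthogonal_transformation_plane_rotation[OF bc]]
    by simp
  then show ?thesis
    using has_real_derivative_cone_integral_plane_rotation[OF assms] DERIV_unique DERIV_const
    by metis
qed

lemma blinfun_apply_Basis_expansion:
  fixes L :: "'a::euclidean_space \<Rightarrow>\<^sub>L real"
  shows "L x = (\<Sum>c\<in>Basis. (x \<bullet> c) * L c)"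
proof -
  have "L x = L (\<Sum>c\<in>Basis. (x \<bullet> c) *\<^sub>R c)"
    by (simp add: euclidean_representation)
  then show ?thesis
    by (simp add: blinfun.sum_right blinfun.scaleR_right)
qed

lemma blinfun_apply2_Basis_expansion:
  fixes H :: "'a::euclidean_space \<Rightarrow>\<^sub>L 'a \<Rightarrow>\<^sub>L real"
  shows "H x y = (\<Sum>b\<in>Basis. \<Sum>c\<in>Basis. (x \<bullet> b) * (y \<bullet> c) * H b c)"
proof -
  have "H x y = H (\<Sum>b\<in>Basis. (x \<bullet> b) *\<^sub>R b) (\<Sum>c\<in>Basis. (y \<bullet> c) *\<^sub>R c)"
    by (simp add: euclidean_representation)
  also have "\<dots> = (\<Sum>b\<in>Basis. \<Sum>c\<in>Basis. (x \<bullet> b) * (y \<bullet> c) * H b c)"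
    by (simp add: blinfun.sum_left blinfun.sum_right blinfun.scaleR_left blinfun.scaleR_right
        sum_distrib_left mult.assoc, subst sum.swap, simp add: mult.left_commute)
  finally show ?thesis .
qed

lemma sum_rotation_generator_bilinear:
  fixes H :: "'a::euclidean_space \<Rightarrow>\<^sub>L 'a \<Rightarrow>\<^sub>L real"
  shows "(\<Sum>b\<in>Basis. \<Sum>c\<in>Basis - {b}. H (rotation_generator b c x) (rotation_generator b c x))
       = 2 * ((x \<bullet> x) * (\<Sum>b\<in>Basis. H b b) - H x x)"
proof -
  define P where "P b = x \<bullet> b" for b
  have diag: "H (rotation_generator b b x) (rotation_generator b b x) = 0" for b
    by (simp add: rotation_generator_def)
  have expand: "H (rotation_generator b c x) (rotation_generator b c x)
      = P b * P b * H c c - P b * P c * H c b - P c * P b * H b c + P c * P c * H b b" for b c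
    by (simp add: rotation_generator_def P_def blinfun.diff_left blinfun.diff_right
        blinfun.scaleR_left blinfun.scaleR_right algebra_simps)
  have xx: "x \<bullet> x = (\<Sum>b\<in>Basis. P b * P b)"
    unfolding P_def by (rule euclidean_inner)
  have Hxx: "H x x = (\<Sum>b\<in>Basis. \<Sum>c\<in>Basis. P b * P c * H b c)"
    unfolding P_def by (rule blinfun_apply2_Basis_expansion)
  have "(\<Sum>b\<in>Basis. \<Sum>c\<in>Basis - {b}. H (rotation_generator b c x) (rotation_generator b c x))
      = (\<Sum>b\<in>Basis. \<Sum>c\<in>Basis. H (rotation_generator b c x) (rotation_generator b c x))"
    by (rule sum.cong[OF refl]) (simp add: sum_diff1 diag)
  also have "\<dots> = (\<Sum>b\<in>Basis. \<Sum>c\<in>Basis. P b * P b * H c c) - (\<Sum>b\<in>Basis. \<Sum>c\<in>Basis. P b * P c * H c b)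
      - (\<Sum>b\<in>Basis. \<Sum>c\<in>Basis. P c * P b * H b c) + (\<Sum>b\<in>Basis. \<Sum>c\<in>Basis. P c * P c * H b b)"
    unfolding expand by (simp add: sum.distrib sum_subtractf)
  also have "\<dots> = 2 * ((x \<bullet> x) * (\<Sum>b\<in>Basis. H b b) - H x x)"
    unfolding xx Hxx sum_product
    by (subst (2 4) sum.swap) (simp add: algebra_simps)
  finally show ?thesis .
qed

lemma sum_rotation_generator_squared:
  fixes L :: "'a::euclidean_space \<Rightarrow>\<^sub>L real"
  shows "(\<Sum>b\<in>Basis. \<Sum>c\<in>Basis - {b}. L (rotation_generator b c (rotation_generator b c x)))
       = - 2 * (real DIM('a) - 1) * L x"
proof -
  define n where "n = real DIM('a)"
  have square:
    "rotation_generator b c (rotation_generator b c x) = - ((x \<bullet> c) *\<^sub>R c + (x \<bullet> b) *\<^sub>R b)"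
    if "b \<in> Basis" "c \<in> Basis - {b}" for b c
    using that by (auto simp: rotation_generator_def inner_diff_left inner_Basis algebra_simps)
  have inner_sum: "(\<Sum>c\<in>Basis - {b}. L (rotation_generator b c (rotation_generator b c x)))
      = - (L x + (n - 2) * ((x \<bullet> b) * L b))" if b: "b \<in> Basis" for b
  proof -
    have "(\<Sum>c\<in>Basis - {b}. L (rotation_generator b c (rotation_generator b c x)))
        = (\<Sum>c\<in>Basis - {b}. - ((x \<bullet> c) * L c + (x \<bullet> b) * L b))"
      using b by (intro sum.cong)
        (simp_all add: square blinfun.minus_right blinfun.diff_right blinfun.add_right
          blinfun.scaleR_right)
    also have "\<dots> = - ((\<Sum>c\<in>Basis - {b}. (x \<bullet> c) * L c) + (n - 1) * ((x \<bullet> b) * L b))"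
    proof -
      have "real (card (Basis - {b})) = n - 1"
        using b DIM_positive[where 'a = 'a] by (simp add: n_def of_nat_diff)
      then show ?thesis
        by (simp add: sum_negf sum_subtractf)
    qed
    also have "(\<Sum>c\<in>Basis - {b}. (x \<bullet> c) * L c) = L x - (x \<bullet> b) * L b"
      using b by (simp add: sum_diff1 blinfun_apply_Basis_expansion[of L x])
    finally show ?thesis
      by (simp add: algebra_simps)
  qed
  have "(\<Sum>b\<in>Basis. \<Sum>c\<in>Basis - {b}. L (rotation_generator b c (rotation_generator b c x)))
      = (\<Sum>b\<in>Basis. - (L x + (n - 2) * ((x \<bullet> b) * L b)))"
    by (simp add: inner_sum)
  also have "\<dots> = - (n * L x + (n - 2) * L x)"
  proof -
    have "(\<Sum>b\<in>Basis. (x \<bullet> b) * L b) = L x"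
      by (rule blinfun_apply_Basis_expansion[symmetric])
    then show ?thesis
      by (simp add: sum_subtractf sum_distrib_left[symmetric] n_def)
  qed
  finally show ?thesis
    by (simp add: n_def algebra_simps)
qed

lemma sum_rotation_generator_terms:
  fixes L :: "'a::euclidean_space \<Rightarrow>\<^sub>L real" and H :: "'a \<Rightarrow>\<^sub>L 'a \<Rightarrow>\<^sub>L real"
  assumes "x \<bullet> x = 1"
  shows "(\<Sum>b\<in>Basis. \<Sum>c\<in>Basis - {b}. L (rotation_generator b c (rotation_generator b c x))
          + r * H (rotation_generator b c x) (rotation_generator b c x))
       = 2 * r * lap_of H - 2 * r * H x x - 2 * (real DIM('a) - 1) * L x"
  using assms
  by (simp add: sum.distrib sum_distrib_left[symmetric] sum_rotation_generator_squared
      sum_rotation_generator_bilinear lap_of_def algebra_simps)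

section \<open>Spherical means of nonnegative superharmonic functions\<close>

lemma le_minus_ln_if_derivative_ge_div:
  fixes f f' :: "real \<Rightarrow> real"
  assumes t: "0 < t" "t \<le> r"
    and f: "\<And>s. t \<le> s \<Longrightarrow> s \<le> r \<Longrightarrow> (f has_real_derivative f' s) (at s)"
    and f': "\<And>s. t \<le> s \<Longrightarrow> s \<le> r \<Longrightarrow> K / s \<le> f' s"
  shows "f t \<le> f r - K * ln (r / t)"
proof -
  have "f t - K * ln t \<le> f r - K * ln r"
  proof (rule DERIV_nonneg_imp_nondecreasing[OF t(2)])
    fix s assume s: "t \<le> s" "s \<le> r"
    then have "((\<lambda>s. f s - K * ln s) has_real_derivative f' s - K * (1 / s)) (at s)"
      using t by (intro DERIV_diff f DERIV_cmult DERIV_ln_divide) auto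
    moreover have "0 \<le> f' s - K * (1 / s)"
      using f'[OF s] by simp
    ultimately show "\<exists>y. ((\<lambda>s. f s - K * ln s) has_real_derivative y) (at s) \<and> 0 \<le> y"
      by blast
  qed
  then show ?thesis
    using t by (simp add: ln_div algebra_simps)
qed

lemma has_vector_derivative_along_ray:
  assumes "(f has_derivative Df) (at (t *\<^sub>R \<omega>))"
  shows "((\<lambda>t. f (t *\<^sub>R \<omega>)) has_vector_derivative Df \<omega>) (at t)"
proof -
  have "((\<lambda>t. f (t *\<^sub>R \<omega>)) has_derivative (\<lambda>h. Df (h *\<^sub>R \<omega>))) (at t)"
    by (rule has_derivative_compose[of "\<lambda>t. t *\<^sub>R \<omega>" "\<lambda>h. h *\<^sub>R \<omega>", OF _ assms])
      (auto intro!: derivative_eq_intros)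
  then show ?thesis
    using linear_cmul[OF has_derivative_linear[OF assms]] by (simp add: has_vector_derivative_def)
qed

lemma pos_if_mem_ball_half: "t \<in> ball r (r/2) \<Longrightarrow> 0 < t"
  unfolding mem_ball dist_real_def abs_less_iff by linarith

text \<open>The origin is excluded because for \<open>\<sigma> < 0\<close> a classical solution need not be
  differentiable there.\<close>

locale superharmonic_off_origin =
  fixes u :: "'a::euclidean_space \<Rightarrow> real" and Du :: "'a \<Rightarrow> 'a \<Rightarrow>\<^sub>L real"
    and D2u :: "'a \<Rightarrow> 'a \<Rightarrow>\<^sub>L 'a \<Rightarrow>\<^sub>L real"
  assumes has_derivative_u: "\<And>x. x \<noteq> 0 \<Longrightarrow> (u has_derivative Du x) (at x)"
    and has_derivative_Du: "\<And>x. x \<noteq> 0 \<Longrightarrow> (Du has_derivative D2u x) (at x)"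
    and continuous_D2u: "continuous_on (- {0}) D2u"
    and lap_nonpos: "\<And>x. x \<noteq> 0 \<Longrightarrow> lap_of (D2u x) \<le> 0"
    and continuous_u: "continuous_on UNIV u"
    and nonneg: "\<And>x. 0 \<le> u x"
begin

text \<open>Up to the volume of the unit ball, these are the means over the sphere of radius \<open>r\<close> of
  \<open>u\<close>, of its first and second radial derivatives and of its Laplacian.\<close>

definition cone_u :: "real \<Rightarrow> real" where
  "cone_u r = cone_integral (\<lambda>\<omega>. u (r *\<^sub>R \<omega>))"

definition cone_Du :: "real \<Rightarrow> real" where
  "cone_Du r = cone_integral (\<lambda>\<omega>. Du (r *\<^sub>R \<omega>) \<omega>)"

definition cone_D2u :: "real \<Rightarrow> real" where
  "cone_D2u r = cone_integral (\<lambda>\<omega>. D2u (r *\<^sub>R \<omega>) \<omega> \<omega>)"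

definition cone_lap :: "real \<Rightarrow> real" where
  "cone_lap r = cone_integral (\<lambda>\<omega>. lap_of (D2u (r *\<^sub>R \<omega>)))"

lemma continuous_Du: "continuous_on (- {0}) Du"
  using has_derivative_Du has_derivative_continuous
  by (intro continuous_at_imp_continuous_on) blast

lemma continuous_on_sphere_u: "continuous_on (sphere 0 1) (\<lambda>\<omega>. u (t *\<^sub>R \<omega>))"
  by (rule continuous_on_compose2[OF continuous_u]) (auto intro!: continuous_intros)

lemma continuous_on_sphere_Du: "t \<noteq> 0 \<Longrightarrow> continuous_on (sphere 0 1) (\<lambda>\<omega>. Du (t *\<^sub>R \<omega>))"
  by (rule continuous_on_compose2[OF continuous_Du]) (auto intro!: continuous_intros)

lemma continuous_on_sphere_D2u: "t \<noteq> 0 \<Longrightarrow> continuous_on (sphere 0 1) (\<lambda>\<omega>. D2u (t *\<^sub>R \<omega>))"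
  by (rule continuous_on_compose2[OF continuous_D2u]) (auto intro!: continuous_intros)

lemma continuous_on_annulus_Du:
  "r > 0 \<Longrightarrow> continuous_on (cball r (r/2) \<times> sphere 0 1) (\<lambda>p. Du (fst p *\<^sub>R snd p))"
  by (rule continuous_on_compose2[OF continuous_Du])
    (auto intro!: continuous_intros simp: dist_real_def)

lemma continuous_on_annulus_D2u:
  "r > 0 \<Longrightarrow> continuous_on (cball r (r/2) \<times> sphere 0 1) (\<lambda>p. D2u (fst p *\<^sub>R snd p))"
  by (rule continuous_on_compose2[OF continuous_D2u])
    (auto intro!: continuous_intros simp: dist_real_def)

lemma continuous_on_sphere_Du_apply: "t \<noteq> 0 \<Longrightarrow> continuous_on (sphere 0 1) (\<lambda>\<omega>. Du (t *\<^sub>R \<omega>) \<omega>)"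
  by (intro blinfun.continuous_on[OF continuous_on_sphere_Du] continuous_intros)

lemma continuous_on_sphere_D2u_apply: "t \<noteq> 0 \<Longrightarrow> continuous_on (sphere 0 1) (\<lambda>\<omega>. D2u (t *\<^sub>R \<omega>) \<omega> \<omega>)"
  by (intro blinfun.continuous_on[OF blinfun.continuous_on[OF continuous_on_sphere_D2u]]
      continuous_intros)

lemma continuous_on_sphere_lap: "t \<noteq> 0 \<Longrightarrow> continuous_on (sphere 0 1) (\<lambda>\<omega>. lap_of (D2u (t *\<^sub>R \<omega>)))"
  unfolding lap_of_def
  by (intro continuous_on_sum
      blinfun.continuous_on[OF blinfun.continuous_on[OF continuous_on_sphere_D2u]]
      continuous_intros)

lemma has_real_derivative_cone_u:
  assumes r: "r > 0"
  shows "(cone_u has_real_derivative cone_Du r) (at r)"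
  unfolding cone_u_def[abs_def] cone_Du_def
proof (rule has_real_derivative_cone_integral[where d = "r/2"])
  fix t and \<omega> :: 'a assume t: "t \<in> ball r (r/2)" and \<omega>: "\<omega> \<in> sphere 0 1"
  then have "t *\<^sub>R \<omega> \<noteq> 0"
    using pos_if_mem_ball_half by auto
  from has_vector_derivative_along_ray[OF has_derivative_u[OF this]]
  show "((\<lambda>t. u (t *\<^sub>R \<omega>)) has_real_derivative Du (t *\<^sub>R \<omega>) \<omega>) (at t)"
    by (simp add: has_real_derivative_iff_has_vector_derivative)
next
  have "continuous_on (cball r (r/2) \<times> sphere 0 1) (\<lambda>p. Du (fst p *\<^sub>R snd p) (snd p))"
    by (intro blinfun.continuous_on[OF continuous_on_annulus_Du[OF r]] continuous_intros)
  then show "continuous_on (cball r (r/2) \<times> sphere 0 1) (\<lambda>(t, \<omega>). Du (t *\<^sub>R \<omega>) \<omega>)"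
    by (simp add: case_prod_beta')
qed (use r continuous_on_sphere_u in auto)

lemma has_real_derivative_cone_Du:
  assumes r: "r > 0"
  shows "(cone_Du has_real_derivative cone_D2u r) (at r)"
  unfolding cone_Du_def[abs_def] cone_D2u_def
proof (rule has_real_derivative_cone_integral[where d = "r/2"])
  fix t and \<omega> :: 'a assume t: "t \<in> ball r (r/2)" and \<omega>: "\<omega> \<in> sphere 0 1"
  then have "t *\<^sub>R \<omega> \<noteq> 0"
    using pos_if_mem_ball_half by auto
  from has_vector_derivative_along_ray[OF has_derivative_Du[OF this]]
  have "((\<lambda>t. Du (t *\<^sub>R \<omega>)) has_derivative (\<lambda>h. h *\<^sub>R D2u (t *\<^sub>R \<omega>) \<omega>)) (at t)"
    by (simp add: has_vector_derivative_def)
  from bounded_linear.has_derivative[OF blinfun.bounded_linear_left this, of \<omega>]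
  show "((\<lambda>t. Du (t *\<^sub>R \<omega>) \<omega>) has_real_derivative D2u (t *\<^sub>R \<omega>) \<omega> \<omega>) (at t)"
    by (simp add: has_field_derivative_def blinfun.scaleR_left mult.commute[of _ "D2u _ _ _"])
next
  fix t assume "t \<in> ball r (r/2)"
  then have "t \<noteq> 0"
    using pos_if_mem_ball_half by fastforce
  then show "continuous_on (sphere 0 1) (\<lambda>\<omega>. Du (t *\<^sub>R \<omega>) \<omega>)"
    by (rule continuous_on_sphere_Du_apply)
next
  have "continuous_on (cball r (r/2) \<times> sphere 0 1) (\<lambda>p. D2u (fst p *\<^sub>R snd p) (snd p) (snd p))"
    by (intro blinfun.continuous_on[OF blinfun.continuous_on[OF continuous_on_annulus_D2u[OF r]]]
        continuous_intros)
  then show "continuous_on (cball r (r/2) \<times> sphere 0 1) (\<lambda>(t, \<omega>). D2u (t *\<^sub>R \<omega>) \<omega> \<omega>)"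
    by (simp add: case_prod_beta')
qed (use r in auto)

lemma cone_integral_rotation_identity:
  assumes r: "r > 0" and bc: "b \<in> Basis" "c \<in> Basis" "b \<noteq> c"
  defines "A \<equiv> rotation_generator b c"
  shows "cone_integral (\<lambda>\<omega>. Du (r *\<^sub>R \<omega>) (A (A \<omega>)) + r * D2u (r *\<^sub>R \<omega>) (A \<omega>) (A \<omega>)) = 0"
proof -
  define Dw where "Dw y h = Du (r *\<^sub>R y) (A h) + D2u (r *\<^sub>R y) (r *\<^sub>R h) (A y)" for y h :: 'a
  have "cone_integral (\<lambda>\<omega>. Dw \<omega> (A \<omega>)) = 0"
    unfolding A_def
  proof (rule cone_integral_rotation_generator_eq_0[where U = "- {0}"
        and w = "\<lambda>y. Du (r *\<^sub>R y) (A y)"])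
    show "b \<bullet> b = 1" "c \<bullet> c = 1" "b \<bullet> c = 0"
      using bc by (auto simp: inner_Basis)
    fix y :: 'a assume "y \<in> - {0}"
    then have "r *\<^sub>R y \<noteq> 0"
      using r by auto
    have "((\<lambda>y. r *\<^sub>R y) has_derivative (\<lambda>h. r *\<^sub>R h)) (at y)"
      by (auto intro!: derivative_eq_intros)
    from diff_chain_at[OF this has_derivative_Du[OF \<open>r *\<^sub>R y \<noteq> 0\<close>]]
    have "((\<lambda>y. Du (r *\<^sub>R y)) has_derivative (\<lambda>h. D2u (r *\<^sub>R y) (r *\<^sub>R h))) (at y)"
      by (simp add: comp_def)
    from blinfun.FDERIV[OF this linear_imp_has_derivative[OF linear_rotation_generator]]
    show "((\<lambda>y. Du (r *\<^sub>R y) (A y)) has_derivative Dw y) (at y)"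
      unfolding Dw_def[abs_def] A_def by simp
  next
    have "continuous_on ((- {0}) \<times> UNIV) (\<lambda>p::'a \<times> 'a. Du (r *\<^sub>R fst p))"
      by (rule continuous_on_compose2[OF continuous_Du])
        (use r in \<open>auto intro!: continuous_intros\<close>)
    moreover have "continuous_on ((- {0}) \<times> UNIV) (\<lambda>p::'a \<times> 'a. D2u (r *\<^sub>R fst p))"
      by (rule continuous_on_compose2[OF continuous_D2u])
        (use r in \<open>auto intro!: continuous_intros\<close>)
    ultimately have "continuous_on ((- {0}) \<times> UNIV) (\<lambda>p::'a \<times> 'a. Dw (fst p) (snd p))"
      unfolding Dw_def A_def
      by (intro continuous_on_add blinfun.continuous_on continuous_intros
          continuous_on_compose2[OF continuous_on_rotation_generator]) auto
    then show "continuous_on ((- {0}) \<times> UNIV) (\<lambda>(y, h). Dw y h)"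
      by (simp add: case_prod_beta')
  qed auto
  moreover have "Dw \<omega> (A \<omega>) = Du (r *\<^sub>R \<omega>) (A (A \<omega>)) + r * D2u (r *\<^sub>R \<omega>) (A \<omega>) (A \<omega>)" for \<omega>
    unfolding Dw_def by (simp add: blinfun.scaleR_right blinfun.scaleR_left)
  ultimately show ?thesis
    by simp
qed

lemma cone_lap_identity:
  assumes r: "r > 0"
  shows "r * cone_lap r = r * cone_D2u r + (real DIM('a) - 1) * cone_Du r"
proof -
  define T where "T b c \<omega> = Du (r *\<^sub>R \<omega>) (rotation_generator b c (rotation_generator b c \<omega>))
    + r * D2u (r *\<^sub>R \<omega>) (rotation_generator b c \<omega>) (rotation_generator b c \<omega>)" for b c \<omega> :: 'a
  have T_cont: "continuous_on (sphere 0 1) (T b c)" for b c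
    unfolding T_def using r
    by (intro continuous_on_add continuous_on_mult continuous_on_const
        blinfun.continuous_on[OF continuous_on_sphere_Du] blinfun.continuous_on[OF
          blinfun.continuous_on[OF continuous_on_sphere_D2u]]
        continuous_on_compose2[OF continuous_on_rotation_generator continuous_on_rotation_generator]
        continuous_on_rotation_generator)
      auto
  have "cone_integral (T b c) = 0" if "b \<in> Basis" "c \<in> Basis - {b}" for b c
    using cone_integral_rotation_identity[OF r, of b c] that unfolding T_def[abs_def] by auto
  then have "0 = (\<Sum>b\<in>Basis. \<Sum>c\<in>Basis - {b}. cone_integral (T b c))"
    by simp
  also have "\<dots> = cone_integral (\<lambda>\<omega>. \<Sum>b\<in>Basis. \<Sum>c\<in>Basis - {b}. T b c \<omega>)"
    by (simp add: cone_integral_sum T_cont continuous_on_sum)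
  also have "\<dots> = cone_integral (\<lambda>\<omega>. 2 * r * lap_of (D2u (r *\<^sub>R \<omega>)) - 2 * r * D2u (r *\<^sub>R \<omega>) \<omega> \<omega>
      - 2 * (real DIM('a) - 1) * Du (r *\<^sub>R \<omega>) \<omega>)"
    by (rule cone_integral_cong)
      (simp add: T_def sum_rotation_generator_terms flip: norm_eq_1)
  also have "\<dots> = 2 * r * cone_lap r - 2 * r * cone_D2u r - 2 * (real DIM('a) - 1) * cone_Du r"
    using r
    by (simp add: cone_lap_def cone_D2u_def cone_Du_def cone_integral_diff cone_integral_cmult
        continuous_on_diff continuous_on_mult_left continuous_on_sphere_Du_apply
        continuous_on_sphere_D2u_apply continuous_on_sphere_lap)
  finally show ?thesis
    by (simp add: algebra_simps)
qed

lemma cone_lap_nonpos: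
  assumes "r > 0"
  shows "cone_lap r \<le> 0"
proof -
  have "lap_of (D2u (r *\<^sub>R \<omega>)) \<le> 0" if "\<omega> \<in> sphere 0 1" for \<omega>
  proof -
    have "\<omega> \<noteq> 0"
      using that by auto
    then show ?thesis
      using lap_nonpos[of "r *\<^sub>R \<omega>"] assms by simp
  qed
  then show ?thesis
    using cone_integral_mono[of "\<lambda>\<omega>. lap_of (D2u (r *\<^sub>R \<omega>))" "\<lambda>_. 0"] assms
    by (simp add: cone_lap_def cone_integral_const continuous_on_sphere_lap)
qed

lemma cone_u_nonneg: "0 \<le> cone_u r"
  using cone_integral_mono[of "\<lambda>_. 0" "\<lambda>\<omega>. u (r *\<^sub>R \<omega>)"]
  by (simp add: cone_u_def cone_integral_const continuous_on_sphere_u nonneg)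

lemma has_real_derivative_flux:
  assumes r: "r > 0"
  shows "((\<lambda>t. t ^ (DIM('a) - 1) * cone_Du t) has_real_derivative r ^ (DIM('a) - 1) * cone_lap r)
    (at r)"
proof -
  define k where "k = DIM('a) - 1"
  have k: "real k = real DIM('a) - 1"
    using DIM_positive[where 'a = 'a] by (simp add: k_def)
  have "real k * r ^ (k - 1) * cone_Du r + cone_D2u r * r ^ k = r ^ k * cone_lap r"
  proof (cases k)
    case 0
    then show ?thesis
      using cone_lap_identity[OF r] r k by simp
  next
    case (Suc j)
    have "real k * r ^ (k - 1) * cone_Du r + cone_D2u r * r ^ k
        = r ^ j * (r * cone_D2u r + real k * cone_Du r)"
      using Suc by (simp add: algebra_simps)
    also have "\<dots> = r ^ j * (r * cone_lap r)"
      using cone_lap_identity[OF r] k by simp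
    finally show ?thesis
      using Suc by (simp add: algebra_simps)
  qed
  then show ?thesis
    using DERIV_mult[OF DERIV_pow has_real_derivative_cone_Du[OF r], of k]
    by (simp add: k_def)
qed

lemma flux_antimono:
  assumes "0 < r" "r \<le> s"
  shows "s ^ (DIM('a) - 1) * cone_Du s \<le> r ^ (DIM('a) - 1) * cone_Du r"
proof (rule DERIV_nonpos_imp_nonincreasing[OF assms(2)])
  fix t assume "r \<le> t" "t \<le> s"
  then have "t > 0"
    using assms(1) by simp
  then show "\<exists>y. ((\<lambda>t. t ^ (DIM('a) - 1) * cone_Du t) has_real_derivative y) (at t) \<and> y \<le> 0"
    using has_real_derivative_flux cone_lap_nonpos
    by (meson mult_nonneg_nonpos zero_le_power less_imp_le)
qed

lemma flux_nonpos:
  assumes n: "DIM('a) \<ge> 2" and r0: "0 < r0"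
  shows "r0 ^ (DIM('a) - 1) * cone_Du r0 \<le> 0"
proof (rule ccontr)
  define k where "k = DIM('a) - 1"
  assume "\<not> ?thesis"
  then have m: "0 < r0 ^ k * cone_Du r0"
    by (simp add: k_def)
  define K where "K = r0 ^ k * cone_Du r0 / r0 ^ (k - 1)"
  have K: "K > 0"
    using m r0 by (simp add: K_def)
  have lower: "K / t \<le> cone_Du t" if t: "0 < t" "t \<le> r0" for t
  proof -
    have tk: "t ^ k = t * t ^ (k - 1)"
      using n by (simp add: k_def power_eq_if)
    have mt: "r0 ^ k * cone_Du r0 \<le> t ^ k * cone_Du t"
      using flux_antimono[OF t] by (simp add: k_def)
    then have "0 \<le> cone_Du t"
      using m t by (smt (verit) zero_less_power mult_pos_neg)
    then have "t ^ k * cone_Du t \<le> t * r0 ^ (k - 1) * cone_Du t"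
      unfolding tk using t by (intro mult_right_mono mult_left_mono power_mono) auto
    with mt have "K * r0 ^ (k - 1) \<le> t * cone_Du t * r0 ^ (k - 1)"
      using r0 by (simp add: K_def algebra_simps)
    then show ?thesis
      using t r0 by (simp add: field_simps)
  qed
  define t where "t = r0 * exp (- ((cone_u r0 + 1) / K))"
  have t: "0 < t" "t \<le> r0"
    using r0 K cone_u_nonneg[of r0] by (auto simp: t_def mult_le_cancel_left1)
  have "cone_u t \<le> cone_u r0 - K * ln (r0 / t)"
    by (rule le_minus_ln_if_derivative_ge_div[OF t has_real_derivative_cone_u lower])
      (use t in auto)
  also have "\<dots> = -1"
    using r0 K by (simp add: t_def ln_div ln_mult)
  finally show False
    using cone_u_nonneg[of t] by simp
qed

lemma cone_Du_nonpos: "DIM('a) \<ge> 2 \<Longrightarrow> 0 < r \<Longrightarrow> cone_Du r \<le> 0"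
  using flux_nonpos[of r] zero_less_power[of r "DIM('a) - 1"] by (metis mult_pos_pos not_le)

lemma sph_avg_eq_cone_u: "t \<noteq> 0 \<Longrightarrow> sph_avg u t = cone_u t / measure lborel (ball (0::'a) 1)"
proof -
  assume "t \<noteq> 0"
  have "integral (ball 0 1) (\<lambda>x::'a. u (t *\<^sub>R (x /\<^sub>R norm x)))
      = integral (ball 0 1 - {0}) (\<lambda>x::'a. u (t *\<^sub>R (x /\<^sub>R norm x)))"
    by (rule integral_spike_set) (auto intro: negligible_subset[of "{0}"])
  with \<open>t \<noteq> 0\<close> show ?thesis
    by (simp add: sph_avg_def cone_u_def cone_integral_def)
qed

lemma has_real_derivative_sph_avg:
  assumes "r > 0"
  shows "(sph_avg u has_real_derivative cone_Du r / measure lborel (ball (0::'a) 1)) (at r)"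
proof (rule has_field_derivative_transform_within_open[where S = "{0<..}"])
  show "((\<lambda>t. cone_u t / measure lborel (ball (0::'a) 1)) has_real_derivative
      cone_Du r / measure lborel (ball (0::'a) 1)) (at r)"
    by (rule DERIV_cdivide[OF has_real_derivative_cone_u[OF assms]])
qed (use assms sph_avg_eq_cone_u in auto)

lemma deriv_sph_avg: "r > 0 \<Longrightarrow> deriv (sph_avg u) r = cone_Du r / measure lborel (ball (0::'a) 1)"
  by (rule DERIV_imp_deriv[OF has_real_derivative_sph_avg])

lemma sph_avg_antimono:
  assumes "DIM('a) \<ge> 2" "0 < r" "r \<le> s"
  shows "sph_avg u s \<le> sph_avg u r"
proof (rule DERIV_nonpos_imp_nonincreasing[OF assms(3)])
  fix t assume "r \<le> t" "t \<le> s"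
  then have "0 < t"
    using assms(2) by simp
  then show "\<exists>y. (sph_avg u has_real_derivative y) (at t) \<and> y \<le> 0"
    using has_real_derivative_sph_avg cone_Du_nonpos[OF assms(1)]
    by (meson divide_nonpos_nonneg measure_nonneg)
qed

lemma flux_sph_avg_antimono:
  assumes "0 < r" "r \<le> s"
  shows "s ^ (DIM('a) - 1) * deriv (sph_avg u) s \<le> r ^ (DIM('a) - 1) * deriv (sph_avg u) r"
proof -
  have "s ^ (DIM('a) - 1) * cone_Du s / measure lborel (ball (0::'a) 1)
      \<le> r ^ (DIM('a) - 1) * cone_Du r / measure lborel (ball (0::'a) 1)"
    by (rule divide_right_mono[OF flux_antimono[OF assms]]) simp
  then show ?thesis
    using assms by (simp add: deriv_sph_avg)
qed

lemma flux_sph_avg_nonpos: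
  assumes "DIM('a) \<ge> 2" "0 < r"
  shows "r ^ (DIM('a) - 1) * deriv (sph_avg u) r \<le> 0"
proof -
  have "r ^ (DIM('a) - 1) * cone_Du r / measure lborel (ball (0::'a) 1) \<le> 0"
    by (rule divide_nonpos_nonneg[OF flux_nonpos[OF assms]]) simp
  then show ?thesis
    using assms by (simp add: deriv_sph_avg)
qed

lemma sph_avg_le_center:
  assumes n: "DIM('a) \<ge> 2" and r: "0 < r"
  shows "sph_avg u r \<le> u 0"
proof (rule field_le_epsilon)
  fix e :: real assume "e > 0"
  then obtain \<delta> where \<delta>: "\<delta> > 0" "\<And>y. dist y 0 < \<delta> \<Longrightarrow> dist (u y) (u 0) < e"
    using continuous_u unfolding continuous_on_iff by (metis UNIV_I)
  define t where "t = min r (\<delta> / 2)"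
  have t: "0 < t" "t \<le> r" "t < \<delta>"
    using r \<delta> by (auto simp: t_def)
  have "cone_u t \<le> cone_integral (\<lambda>_::'a. u 0 + e)"
    unfolding cone_u_def
  proof (rule cone_integral_mono[OF continuous_on_sphere_u continuous_on_const])
    fix \<omega> :: 'a assume "\<omega> \<in> sphere 0 1"
    then have "dist (u (t *\<^sub>R \<omega>)) (u 0) < e"
      using t by (intro \<delta>(2)) simp
    then show "u (t *\<^sub>R \<omega>) \<le> u 0 + e"
      by (simp add: dist_real_def)
  qed
  then have "sph_avg u t \<le> u 0 + e"
    using measure_unit_ball_pos[where 'a = 'a] t
    by (simp add: sph_avg_eq_cone_u cone_integral_const pos_divide_le_eq)
  moreover have "sph_avg u r \<le> sph_avg u t"
    by (rule sph_avg_antimono[OF n t(1,2)])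
  ultimately show "sph_avg u r \<le> u 0 + e"
    by simp
qed

lemma center_pos:
  assumes n: "DIM('a) \<ge> 2" and "u x \<noteq> 0"
  shows "0 < u 0"
proof (rule ccontr)
  assume "\<not> 0 < u 0"
  then have "u 0 = 0"
    using nonneg[of 0] by simp
  with \<open>u x \<noteq> 0\<close> have x: "x \<noteq> 0"
    by auto
  then have "cone_u (norm x) \<le> 0"
    using sph_avg_le_center[OF n, of "norm x"] \<open>u 0 = 0\<close> measure_unit_ball_pos[where 'a = 'a]
    by (simp add: sph_avg_eq_cone_u divide_le_0_iff)
  then have "cone_integral (\<lambda>\<omega>. u (norm x *\<^sub>R \<omega>)) = 0"
    using cone_u_nonneg[of "norm x"] by (simp add: cone_u_def)
  then have "u (norm x *\<^sub>R (x /\<^sub>R norm x)) = 0"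
    by (rule cone_integral_eq_0_imp_eq_0[OF continuous_on_sphere_u nonneg]) (use x in simp)
  with x \<open>u x \<noteq> 0\<close> show False
    by simp
qed

end

lemma classical_solution_superharmonic_off_origin:
  fixes u :: "'a::euclidean_space \<Rightarrow> real"
  assumes "classical_solution \<sigma> p u" and "\<And>x. 0 \<le> u x"
  obtains Du D2u where "superharmonic_off_origin u Du D2u"
proof -
  define S where "S = (if \<sigma> \<ge> 0 then UNIV else UNIV - {0 :: 'a})"
  have S: "- {0} \<subseteq> S"
    by (auto simp: S_def)
  obtain Du D2u where C2: "C2_with S u Du D2u"
    and eq: "\<And>x. x \<in> S \<Longrightarrow> - lap_of (D2u x) = weight \<sigma> x * u x powr p"
    and "continuous_on UNIV u"
    using assms(1) unfolding classical_solution_def Let_def S_def by metis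
  show ?thesis
  proof (rule that, unfold_locales)
    show "(u has_derivative Du x) (at x)" "(Du has_derivative D2u x) (at x)" if "x \<noteq> 0" for x
      using C2 S that unfolding C2_with_def by auto
    show "continuous_on (- {0}) D2u"
      using C2 continuous_on_subset[OF _ S] unfolding C2_with_def by blast
    show "lap_of (D2u x) \<le> 0" if "x \<noteq> 0" for x
    proof -
      have "0 \<le> weight \<sigma> x * u x powr p"
        using that by (simp add: weight_def)
      then show ?thesis
        using eq[of x] S that by auto
    qed
  qed fact+
qed

theorem lemma2p1:
  fixes u :: "'a::euclidean_space \<Rightarrow> real" and \<sigma> p :: real
  assumes "DIM('a) \<ge> 2"
    and "p \<noteq> 0"
    and "\<forall>x. u x \<ge> 0"
    and "\<exists>x. u x \<noteq> 0"
    and "classical_solution \<sigma> p u"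
  shows "(\<forall>r>0. sph_avg u differentiable at r)
       \<and> (\<forall>r s. 0 < r \<and> r \<le> s \<longrightarrow> sph_avg u s \<le> sph_avg u r)
       \<and> (\<forall>r s. 0 < r \<and> r \<le> s \<longrightarrow>
             s ^ (DIM('a) - 1) * deriv (sph_avg u) s \<le> r ^ (DIM('a) - 1) * deriv (sph_avg u) r)
       \<and> (\<forall>r>0. r ^ (DIM('a) - 1) * deriv (sph_avg u) r \<le> 0 \<and> sph_avg u r \<le> u 0)
       \<and> u 0 > 0"
proof -
  obtain Du D2u where "superharmonic_off_origin u Du D2u"
    using classical_solution_superharmonic_off_origin assms(3,5) by blast
  then interpret superharmonic_off_origin u Du D2u .
  have "sph_avg u differentiable at r" if "r > 0" for r
    using has_real_derivative_sph_avg[OF that]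
    by (auto intro: differentiableI has_field_derivative_imp_has_derivative)
  moreover have "u 0 > 0"
    using center_pos assms(1,4) by blast
  ultimately show ?thesis
    using assms(1) sph_avg_antimono flux_sph_avg_antimono flux_sph_avg_nonpos sph_avg_le_center
    by blast
qed

end
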